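(* Let $X$ be a finite discrete space with at least two elements, $\Gamma$ a nonempty countable set, $\varphi:\Gamma\to\Gamma$ any map, and $\sigma_\varphi:X^\Gamma\to X^\Gamma$ the generalized shift. Then each of the following statements is equivalent to "$\varphi$ has at least one non-quasi-periodic point": (a) $(X^\Gamma,\sigma_\varphi)$ is uniform distributional chaotic; (b) it is DC$^u$1; (c) it is DC$^\infty$1; (d) it is DC$^2$1; (e) it is DC$^u$2; (f) it is DC$^\infty$2; (g) it is DC$^2$2.
   Context: $X^\Gamma$ carries the product topology; it is compact metrizable, and $d$ denotes a fixed compatible metric. The generalized shift is $\sigma_\varphi((x_\alpha)_{\alpha\in\Gamma})=(x_{\varphi(\alpha)})_{\alpha\in\Gamma}$. A point $\theta\in\Gamma$ is quasi-periodic for $\varphi$ if $\{\varphi^n(\theta):n\ge0\}$ is finite (equivalently, the orbit meets the set of periodic points); otherwise it is non-quasi-periodic. For a continuous $f:Y\to Y$ on a compact metric space $(Y,d)$, $x,y\in Y$, $t\in\mathbb R$, $n\ge1$, let $\xi(x,y,t,n)=\#\{i\in\{0,\dots,n-1\}:d(f^i(x),f^i(y))<t\}$, $F_{xy}(t)=\liminf_{n\to\infty}\xi(x,y,t,n)/n$, $F^*_{xy}(t)=\limsup_{n\to\infty}\xi(x,y,t,n)/n$. A pair $x,y$ is distributional scrambled of type 1 if there is $s>0$ with $F_{xy}(s)=0$ and $F^*_{xy}(s)=1$ for all $s>0$; of type 2 if there is $s>0$ with $F_{xy}(s)<1$ and $F^*_{xy}(s)=1$ for all $s>0$. A set $A\subseteq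 Y$ with at least two elements is distributional scrambled of type $i$ if every pair of distinct points of $A$ is. $f$ is DC$^u i$ (resp. DC$^\infty i$, DC$^2 i$) if $Y$ has an uncountable (resp. infinite, resp. at least two-element) distributional scrambled set of type $i$. $(Y,f)$ is uniform distributional chaotic if there are an uncountable distributional scrambled set $A$ of type 1 and $\varepsilon>0$ with $F_{xy}(\varepsilon)=0$ for all distinct $x,y\in A$. *)

theory Defs
  imports "HOL-Analysis.Analysis"
begin

definition gshift :: "('g \<Rightarrow> 'g) \<Rightarrow> ('g \<Rightarrow> 'x) \<Rightarrow> ('g \<Rightarrow> 'x)" where
  "gshift \<phi> x = (\<lambda>\<alpha>. x (\<phi> \<alpha>))"

definition quasi_periodic :: "('g \<Rightarrow> 'g) \<Rightarrow> 'g \<Rightarrow> bool" where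
  "quasi_periodic \<phi> \<theta> \<longleftrightarrow> finite {(\<phi> ^^ n) \<theta> | n. True}"

definition compatible_metric :: "(('g \<Rightarrow> 'x) \<Rightarrow> ('g \<Rightarrow> 'x) \<Rightarrow> real) \<Rightarrow> bool" where
  "compatible_metric d \<longleftrightarrow> Metric_space UNIV d \<and>
     Metric_space.mtopology UNIV d = product_topology (\<lambda>_. discrete_topology UNIV) UNIV"

definition xi :: "('a \<Rightarrow> 'a) \<Rightarrow> ('a \<Rightarrow> 'a \<Rightarrow> real) \<Rightarrow> 'a \<Rightarrow> 'a \<Rightarrow> real \<Rightarrow> nat \<Rightarrow> nat" where
  "xi f d x y t n = card {i. i < n \<and> d ((f ^^ i) x) ((f ^^ i) y) < t}"

definition Flow :: "('a \<Rightarrow> 'a) \<Rightarrow> ('a \<Rightarrow> 'a \<Rightarrow> real) \<Rightarrow> 'a \<Rightarrow> 'a \<Rightarrow> real \<Rightarrow> ereal" where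
  "Flow f d x y t = liminf (\<lambda>n. ereal (real (xi f d x y t n) / real n))"

definition Fup :: "('a \<Rightarrow> 'a) \<Rightarrow> ('a \<Rightarrow> 'a \<Rightarrow> real) \<Rightarrow> 'a \<Rightarrow> 'a \<Rightarrow> real \<Rightarrow> ereal" where
  "Fup f d x y t = limsup (\<lambda>n. ereal (real (xi f d x y t n) / real n))"

definition dc1_pair :: "('a \<Rightarrow> 'a) \<Rightarrow> ('a \<Rightarrow> 'a \<Rightarrow> real) \<Rightarrow> 'a \<Rightarrow> 'a \<Rightarrow> bool" where
  "dc1_pair f d x y \<longleftrightarrow> (\<exists>s>0. Flow f d x y s = 0) \<and> (\<forall>s>0. Fup f d x y s = 1)"

definition dc2_pair :: "('a \<Rightarrow> 'a) \<Rightarrow> ('a \<Rightarrow> 'a \<Rightarrow> real) \<Rightarrow> 'a \<Rightarrow> 'a \<Rightarrow> bool" where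
  "dc2_pair f d x y \<longleftrightarrow> (\<exists>s>0. Flow f d x y s < 1) \<and> (\<forall>s>0. Fup f d x y s = 1)"

definition dc1_scrambled :: "('a \<Rightarrow> 'a) \<Rightarrow> ('a \<Rightarrow> 'a \<Rightarrow> real) \<Rightarrow> 'a set \<Rightarrow> bool" where
  "dc1_scrambled f d A \<longleftrightarrow> (\<exists>x\<in>A. \<exists>y\<in>A. x \<noteq> y) \<and>
     (\<forall>x\<in>A. \<forall>y\<in>A. x \<noteq> y \<longrightarrow> dc1_pair f d x y)"

definition dc2_scrambled :: "('a \<Rightarrow> 'a) \<Rightarrow> ('a \<Rightarrow> 'a \<Rightarrow> real) \<Rightarrow> 'a set \<Rightarrow> bool" where
  "dc2_scrambled f d A \<longleftrightarrow> (\<exists>x\<in>A. \<exists>y\<in>A. x \<noteq> y) \<and>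
     (\<forall>x\<in>A. \<forall>y\<in>A. x \<noteq> y \<longrightarrow> dc2_pair f d x y)"

definition DCu1 where "DCu1 f d \<longleftrightarrow> (\<exists>A. uncountable A \<and> dc1_scrambled f d A)"
definition DCinf1 where "DCinf1 f d \<longleftrightarrow> (\<exists>A. infinite A \<and> dc1_scrambled f d A)"
definition DC21 where "DC21 f d \<longleftrightarrow> (\<exists>A. dc1_scrambled f d A)"
definition DCu2 where "DCu2 f d \<longleftrightarrow> (\<exists>A. uncountable A \<and> dc2_scrambled f d A)"
definition DCinf2 where "DCinf2 f d \<longleftrightarrow> (\<exists>A. infinite A \<and> dc2_scrambled f d A)"
definition DC22 where "DC22 f d \<longleftrightarrow> (\<exists>A. dc2_scrambled f d A)"

definition uniform_DC where
  "uniform_DC f d \<longleftrightarrow> (\<exists>A \<epsilon>. uncountable A \<and> dc1_scrambled f d A \<and> \<epsilon> > 0 \<and>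
     (\<forall>x\<in>A. \<forall>y\<in>A. x \<noteq> y \<longrightarrow> Flow f d x y \<epsilon> = 0))"

end

theory Submission
  imports Defs
begin

(* If every point of \<Gamma> is quasi-periodic, fix s0 > 0 and a finite set F of coordinates such that
   agreement on F forces distance < s0, and s > 0 such that distance < s forces agreement on F.
   The orbits of the points of F are eventually periodic with a common period p, so whether
   the i-th iterates of x and y agree on F is eventually p-periodic in i.  Either they eventually
   always agree, and then F_xy(s0) = 1, or they disagree along an arithmetic progression, and then
   F*_xy(s) \<le> 1 - 1/(2p).  So there is no distributionally scrambled pair, not even of type 2.

   If \<theta> is not quasi-periodic, its orbit is injective.  Cut \<nat> into the factorial blocks
   [k!, (k+1)!) and code a set Z of naturals by the point that is b at \<phi>^m(\<theta>) when m lies in an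
   odd block whose tag is in Z, and a everywhere else; every tag labels infinitely many odd blocks.
   A block is much longer than everything before it.  Two different codes disagree at \<theta> on
   infinitely many whole blocks, whence F_xy(\<epsilon>) = 0 for an \<epsilon> separating the coordinate \<theta>; and
   on any finite set of coordinates both codes vanish on almost all of every late even block,
   whence F*_xy(s) = 1 for all s > 0.  The codes form an uncountable set witnessing uniform
   distributional chaos, which implies all the other notions. *)

section \<open>Compatible metrics on X^\<Gamma>\<close>

lemma compatible_metric_limitin_iff:
  fixes d :: "('g \<Rightarrow> 'x) \<Rightarrow> ('g \<Rightarrow> 'x) \<Rightarrow> real"
  assumes "compatible_metric d"
  shows "limitin (Metric_space.mtopology UNIV d) f l sequentially
    \<longleftrightarrow> (\<forall>\<gamma>. \<forall>\<^sub>F n in sequentially. f n \<gamma> = l \<gamma>)"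
proof -
  have discrete: "limitin (discrete_topology UNIV) g c sequentially \<longleftrightarrow> (\<forall>\<^sub>F n in sequentially. g n = c)"
    for g :: "nat \<Rightarrow> 'x" and c
    unfolding limitin_def by (auto elim!: eventually_mono)
  have "Metric_space.mtopology UNIV d = product_topology (\<lambda>_. discrete_topology UNIV) UNIV"
    using assms unfolding compatible_metric_def by blast
  then show ?thesis
    by (simp add: limitin_componentwise discrete)
qed

lemma compatible_metric_seq_compact:
  fixes d :: "('g \<Rightarrow> 'x::finite) \<Rightarrow> ('g \<Rightarrow> 'x) \<Rightarrow> real"
    and \<sigma> :: "nat \<Rightarrow> 'g \<Rightarrow> 'x"
  assumes "compatible_metric d"
  shows "\<exists>l r. strict_mono r \<and> limitin (Metric_space.mtopology UNIV d) (\<sigma> \<circ> r) l sequentially"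
proof -
  interpret Metric_space UNIV d
    using assms unfolding compatible_metric_def by blast
  have "compact_space mtopology"
    using assms unfolding compatible_metric_def
    by (simp add: compact_space_product_topology compact_space_discrete_topology)
  then show ?thesis
    unfolding compact_space_sequentially by (meson subset_UNIV)
qed

lemma compatible_metric_agree_if_close:
  fixes d :: "('g \<Rightarrow> 'x::finite) \<Rightarrow> ('g \<Rightarrow> 'x) \<Rightarrow> real"
  assumes cm: "compatible_metric d" and F: "finite F"
  shows "\<exists>s>0. \<forall>z w. d z w < s \<longrightarrow> (\<forall>\<gamma>\<in>F. z \<gamma> = w \<gamma>)"
proof (rule ccontr)
  interpret Metric_space UNIV d
    using cm unfolding compatible_metric_def by blast
  assume "\<not> ?thesis"
  moreover have "0 < inverse (real (Suc n))" for n
    by simp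
  ultimately have "\<forall>n. \<exists>z w. d z w < inverse (Suc n) \<and> (\<exists>\<gamma>\<in>F. z \<gamma> \<noteq> w \<gamma>)"
    by blast
  then obtain Z W where close: "\<And>n. d (Z n) (W n) < inverse (Suc n)"
    and apart: "\<And>n. \<exists>\<gamma>\<in>F. Z n \<gamma> \<noteq> W n \<gamma>"
    by metis
  obtain l r where r: "strict_mono r" and Z: "limitin mtopology (Z \<circ> r) l sequentially"
    using compatible_metric_seq_compact[OF cm] by blast
  have "(\<lambda>n. inverse (Suc (r n))) \<longlonglongrightarrow> 0"
    using LIMSEQ_subseq_LIMSEQ[OF LIMSEQ_inverse_real_of_nat r] by (simp add: comp_def)
  moreover have "(\<lambda>n. d (Z (r n)) l) \<longlonglongrightarrow> 0"
    using Z by (simp add: limitin_metric_dist_null comp_def)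
  ultimately have lim: "(\<lambda>n. inverse (Suc (r n)) + d (Z (r n)) l) \<longlonglongrightarrow> 0"
    by (rule tendsto_add_zero)
  have bound: "d (W (r n)) l \<le> inverse (Suc (r n)) + d (Z (r n)) l" for n
    using triangle[OF UNIV_I UNIV_I UNIV_I, where x="W (r n)" and y="Z (r n)" and z=l] close[of "r n"]
      commute[of "W (r n)" "Z (r n)"] by linarith
  have "(\<lambda>n. d (W (r n)) l) \<longlonglongrightarrow> 0"
    by (intro real_tendsto_sandwich[OF _ _ tendsto_const lim] always_eventually allI bound nonneg)
  then have "limitin mtopology (W \<circ> r) l sequentially"
    by (simp add: limitin_metric_dist_null comp_def)
  then have "\<forall>\<gamma>\<in>F. \<forall>\<^sub>F n in sequentially. Z (r n) \<gamma> = l \<gamma> \<and> W (r n) \<gamma> = l \<gamma>"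
    using Z by (simp add: compatible_metric_limitin_iff[OF cm] eventually_conj_iff)
  then have "\<forall>\<^sub>F n in sequentially. \<forall>\<gamma>\<in>F. Z (r n) \<gamma> = W (r n) \<gamma>"
    by (rule eventually_mono[OF eventually_ball_finite[OF F]]) simp
  then obtain n where "\<forall>\<gamma>\<in>F. Z (r n) \<gamma> = W (r n) \<gamma>"
    using eventually_happens'[OF sequentially_bot] by blast
  with apart show False
    by blast
qed

lemma compatible_metric_close_if_agree:
  fixes d :: "('g::countable \<Rightarrow> 'x::finite) \<Rightarrow> ('g \<Rightarrow> 'x) \<Rightarrow> real"
  assumes cm: "compatible_metric d" and s: "s > 0"
  shows "\<exists>F. finite F \<and> (\<forall>z w. (\<forall>\<gamma>\<in>F. z \<gamma> = w \<gamma>) \<longrightarrow> d z w < s)"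
proof (rule ccontr)
  interpret Metric_space UNIV d
    using cm unfolding compatible_metric_def by blast
  assume "\<not> ?thesis"
  moreover have "finite (to_nat -` {..<n} :: 'g set)" for n
    by (simp add: finite_vimageI)
  ultimately have "\<forall>n. \<exists>z w. (\<forall>\<gamma>\<in>to_nat -` {..<n}. z \<gamma> = w \<gamma>) \<and> s \<le> d z w"
    by (meson not_less)
  then obtain Z W where agree: "\<And>n. \<forall>\<gamma>\<in>to_nat -` {..<n}. Z n \<gamma> = W n \<gamma>"
    and far: "\<And>n. s \<le> d (Z n) (W n)"
    by metis
  obtain l r where r: "strict_mono r" and Z: "limitin mtopology (Z \<circ> r) l sequentially"
    using compatible_metric_seq_compact[OF cm] by blast
  have "\<forall>\<^sub>F n in sequentially. W (r n) \<gamma> = l \<gamma>" for \<gamma>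
  proof -
    have "\<forall>\<^sub>F n in sequentially. to_nat \<gamma> < r n"
      using eventually_gt_at_top[of "to_nat \<gamma>"]
      by (rule eventually_mono) (meson seq_suble[OF r] less_le_trans)
    moreover have "\<forall>\<^sub>F n in sequentially. Z (r n) \<gamma> = l \<gamma>"
      using Z by (simp add: compatible_metric_limitin_iff[OF cm])
    ultimately show ?thesis
      by eventually_elim (simp add: agree)
  qed
  then have W: "limitin mtopology (W \<circ> r) l sequentially"
    by (simp add: compatible_metric_limitin_iff[OF cm])
  have "(\<lambda>n. d (Z (r n)) l + d (W (r n)) l) \<longlonglongrightarrow> 0"
    using Z W by (auto simp: limitin_metric_dist_null comp_def intro: tendsto_add_zero)
  then have "\<forall>\<^sub>F n in sequentially. d (Z (r n)) l + d (W (r n)) l < s"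
    using s by (simp add: order_tendstoD(2))
  then obtain n where "d (Z (r n)) l + d (W (r n)) l < s"
    using eventually_happens'[OF sequentially_bot] by blast
  then show False
    using far[of "r n"] triangle[of "Z (r n)" l "W (r n)"] commute[of l "W (r n)"] by simp
qed

section \<open>Orbits\<close>

lemma funpow_gshift: "gshift \<phi> ^^ i = gshift (\<phi> ^^ i)"
  by (induction i) (simp_all add: gshift_def fun_eq_iff funpow_swap1[symmetric])

lemma gshift_funpow_apply: "(gshift \<phi> ^^ i) x \<gamma> = x ((\<phi> ^^ i) \<gamma>)"
  by (simp add: funpow_gshift gshift_def)

lemma periodic_from_add_mult:
  fixes g :: "nat \<Rightarrow> 'a"
  assumes "\<And>i. a \<le> i \<Longrightarrow> g (i + q) = g i" and "a \<le> i"
  shows "g (i + k * q) = g i"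
proof (induction k)
  case (Suc k)
  have "g (i + Suc k * q) = g ((i + k * q) + q)"
    by (simp add: algebra_simps)
  also have "\<dots> = g (i + k * q)"
    using assms by simp
  finally show ?case
    using Suc by simp
qed simp

lemma funpow_periodic_from_repeat:
  fixes \<phi> :: "'a \<Rightarrow> 'a"
  assumes "(\<phi> ^^ n) \<gamma> = (\<phi> ^^ m) \<gamma>" and "n \<le> m" and "n \<le> i"
  shows "(\<phi> ^^ (i + (m - n))) \<gamma> = (\<phi> ^^ i) \<gamma>"
proof -
  have "(\<phi> ^^ (i + (m - n))) \<gamma> = (\<phi> ^^ ((i - n) + m)) \<gamma>"
    using assms(2,3) by simp
  also have "\<dots> = (\<phi> ^^ (i - n)) ((\<phi> ^^ n) \<gamma>)"
    by (simp only: funpow_add comp_apply assms(1))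
  also have "\<dots> = (\<phi> ^^ ((i - n) + n)) \<gamma>"
    by (simp only: funpow_add comp_apply)
  also have "\<dots> = (\<phi> ^^ i) \<gamma>"
    using assms(3) by simp
  finally show ?thesis .
qed

lemma not_inj_orbit_repeats:
  assumes "\<not> inj (\<lambda>n. (\<phi> ^^ n) \<theta>)"
  shows "\<exists>n m. n < m \<and> (\<phi> ^^ n) \<theta> = (\<phi> ^^ m) \<theta>"
proof -
  obtain n m where "n \<noteq> m" and eq: "(\<phi> ^^ n) \<theta> = (\<phi> ^^ m) \<theta>"
    using assms unfolding inj_def by blast
  then consider "n < m" | "m < n"
    by linarith
  then show ?thesis
  proof cases
    case 1
    with eq show ?thesis by blast
  next
    case 2
    with eq[symmetric] show ?thesis by blast
  qed
qed

lemma quasi_periodic_iff_not_inj: "quasi_periodic \<phi> \<theta> \<longleftrightarrow> \<not> inj (\<lambda>n. (\<phi> ^^ n) \<theta>)"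
proof
  assume "quasi_periodic \<phi> \<theta>"
  then have "finite (range (\<lambda>n. (\<phi> ^^ n) \<theta>))"
    unfolding quasi_periodic_def by (simp add: full_SetCompr_eq)
  then show "\<not> inj (\<lambda>n. (\<phi> ^^ n) \<theta>)"
    using range_inj_infinite by blast
next
  assume "\<not> inj (\<lambda>n. (\<phi> ^^ n) \<theta>)"
  then obtain n m where nm: "n < m" "(\<phi> ^^ n) \<theta> = (\<phi> ^^ m) \<theta>"
    by (blast dest: not_inj_orbit_repeats)
  define q where "q = m - n"
  have periodic: "(\<phi> ^^ (i + q)) \<theta> = (\<phi> ^^ i) \<theta>" if "n \<le> i" for i
    unfolding q_def using funpow_periodic_from_repeat[OF nm(2) less_imp_le[OF nm(1)] that] .
  have "(\<phi> ^^ i) \<theta> \<in> (\<lambda>j. (\<phi> ^^ j) \<theta>) ` {..<m}" for i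
  proof (cases "i < m")
    case False
    define j where "j = n + (i - n) mod q"
    have "(\<phi> ^^ (j + (i - n) div q * q)) \<theta> = (\<phi> ^^ j) \<theta>"
      unfolding j_def
      by (rule periodic_from_add_mult[where g="\<lambda>i. (\<phi> ^^ i) \<theta>", OF periodic le_add1])
    moreover have "j + (i - n) div q * q = i"
      using False nm(1) unfolding j_def by simp
    ultimately have "(\<phi> ^^ i) \<theta> = (\<phi> ^^ j) \<theta>"
      by simp
    moreover have "j < m"
      using mod_less_divisor[of q "i - n"] nm(1) unfolding j_def q_def by linarith
    ultimately show ?thesis by blast
  qed simp
  then have "{(\<phi> ^^ n) \<theta> | n. True} \<subseteq> (\<lambda>j. (\<phi> ^^ j) \<theta>) ` {..<m}"
    by blast
  then show "quasi_periodic \<phi> \<theta>"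
    unfolding quasi_periodic_def by (rule finite_subset) simp
qed

lemma quasi_periodic_eventually_periodic:
  assumes "quasi_periodic \<phi> \<gamma>"
  shows "\<exists>a q. 0 < q \<and> (\<forall>i\<ge>a. (\<phi> ^^ (i + q)) \<gamma> = (\<phi> ^^ i) \<gamma>)"
proof -
  obtain n m where nm: "n < m" "(\<phi> ^^ n) \<gamma> = (\<phi> ^^ m) \<gamma>"
    using assms unfolding quasi_periodic_iff_not_inj by (blast dest: not_inj_orbit_repeats)
  then have "0 < m - n" "\<forall>i\<ge>n. (\<phi> ^^ (i + (m - n))) \<gamma> = (\<phi> ^^ i) \<gamma>"
    using funpow_periodic_from_repeat[OF nm(2) less_imp_le[OF nm(1)]] by simp_all
  then show ?thesis
    by blast
qed

lemma quasi_periodic_common_period: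
  assumes "finite F" and "\<forall>\<gamma>\<in>F. quasi_periodic \<phi> \<gamma>"
  shows "\<exists>a p. 0 < p \<and> (\<forall>i\<ge>a. \<forall>\<gamma>\<in>F. (\<phi> ^^ (i + p)) \<gamma> = (\<phi> ^^ i) \<gamma>)"
  using assms
proof (induction F rule: finite_induct)
  case empty
  show ?case by (intro exI[of _ 0] exI[of _ 1]) simp
next
  case (insert \<gamma> F)
  then obtain a p where p: "0 < p" "\<forall>i\<ge>a. \<forall>\<gamma>\<in>F. (\<phi> ^^ (i + p)) \<gamma> = (\<phi> ^^ i) \<gamma>"
    by auto
  have "quasi_periodic \<phi> \<gamma>"
    using insert.prems by simp
  then obtain b q where q: "0 < q" "\<forall>i\<ge>b. (\<phi> ^^ (i + q)) \<gamma> = (\<phi> ^^ i) \<gamma>"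
    by (blast dest: quasi_periodic_eventually_periodic)
  have period: "(\<phi> ^^ (i + p * q)) \<delta> = (\<phi> ^^ i) \<delta>" if "max a b \<le> i" "\<delta> \<in> insert \<gamma> F" for i \<delta>
  proof (cases "\<delta> = \<gamma>")
    case True
    show ?thesis
      unfolding True using q that
      by (intro periodic_from_add_mult[where g="\<lambda>i. (\<phi> ^^ i) \<gamma>" and a=b]) auto
  next
    case False
    with that p have "(\<phi> ^^ (i + q * p)) \<delta> = (\<phi> ^^ i) \<delta>"
      by (intro periodic_from_add_mult[where g="\<lambda>i. (\<phi> ^^ i) \<delta>" and a=a]) auto
    then show ?thesis
      by (simp add: mult.commute)
  qed
  have "0 < p * q"
    using p(1) q(1) by simp
  with period show ?case
    by blast
qed

lemma orbit_meet_shift: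
  fixes \<phi> :: "'a \<Rightarrow> 'a"
  assumes inj: "inj (\<lambda>m. (\<phi> ^^ m) \<theta>)"
    and meet: "(\<phi> ^^ i) \<gamma> = (\<phi> ^^ m) \<theta>" "(\<phi> ^^ i') \<gamma> = (\<phi> ^^ m') \<theta>" and "i \<le> i'"
  shows "m' = m + (i' - i)"
proof -
  have "(\<phi> ^^ m') \<theta> = (\<phi> ^^ ((i' - i) + i)) \<gamma>"
    using meet(2) \<open>i \<le> i'\<close> by simp
  also have "\<dots> = (\<phi> ^^ ((i' - i) + m)) \<theta>"
    by (simp only: funpow_add comp_apply meet(1))
  finally have "m' = (i' - i) + m"
    using inj unfolding inj_def by blast
  then show ?thesis
    by simp
qed

lemma orbit_meet_bounded_shift:
  fixes \<phi> :: "'a \<Rightarrow> 'a"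
  assumes inj: "inj (\<lambda>m. (\<phi> ^^ m) \<theta>)"
  shows "\<exists>C. \<forall>i m. (\<phi> ^^ i) \<gamma> = (\<phi> ^^ m) \<theta> \<longrightarrow> i \<le> m + C \<and> m \<le> i + C"
proof (cases "\<exists>i0 m0. (\<phi> ^^ i0) \<gamma> = (\<phi> ^^ m0) \<theta>")
  case True
  then obtain i0 m0 where meet0: "(\<phi> ^^ i0) \<gamma> = (\<phi> ^^ m0) \<theta>"
    by blast
  have "i \<le> m + (i0 + m0) \<and> m \<le> i + (i0 + m0)" if meet: "(\<phi> ^^ i) \<gamma> = (\<phi> ^^ m) \<theta>" for i m
  proof (cases "i0 \<le> i")
    case True
    then show ?thesis
      using orbit_meet_shift[OF inj meet0 meet True] by simp
  next
    case False
    then show ?thesis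
      using orbit_meet_shift[OF inj meet meet0] by simp
  qed
  then show ?thesis
    by blast
qed blast

lemma orbit_meet_bounded_shift_finite:
  fixes \<phi> :: "'a \<Rightarrow> 'a"
  assumes inj: "inj (\<lambda>m. (\<phi> ^^ m) \<theta>)" and F: "finite F"
  shows "\<exists>C. \<forall>\<gamma>\<in>F. \<forall>i m. (\<phi> ^^ i) \<gamma> = (\<phi> ^^ m) \<theta> \<longrightarrow> i \<le> m + C \<and> m \<le> i + C"
proof -
  have "\<forall>\<gamma>. \<exists>C. \<forall>i m. (\<phi> ^^ i) \<gamma> = (\<phi> ^^ m) \<theta> \<longrightarrow> i \<le> m + C \<and> m \<le> i + C"
    using orbit_meet_bounded_shift[OF inj] by blast
  then obtain C where C: "\<forall>\<gamma> i m. (\<phi> ^^ i) \<gamma> = (\<phi> ^^ m) \<theta> \<longrightarrow> i \<le> m + C \<gamma> \<and> m \<le> i + C \<gamma>"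
    by (auto dest: choice)
  have "C \<gamma> \<le> sum C F" if "\<gamma> \<in> F" for \<gamma>
    by (rule member_le_sum[OF that _ F]) simp
  then have "\<forall>\<gamma>\<in>F. \<forall>i m. (\<phi> ^^ i) \<gamma> = (\<phi> ^^ m) \<theta> \<longrightarrow> i \<le> m + sum C F \<and> m \<le> i + sum C F"
    using C by (meson add_left_mono order_trans)
  then show ?thesis
    by blast
qed

section \<open>Frequencies of close times\<close>

lemma xi_le: "xi f d x y t n \<le> n"
  unfolding xi_def by (rule order.trans[OF card_mono[of "{..<n}"]]) auto

lemma xi_le_if_far:
  assumes "\<forall>i. a \<le> i \<and> i < n \<longrightarrow> \<not> d ((f ^^ i) x) ((f ^^ i) y) < t"
  shows "xi f d x y t n \<le> a"
proof -
  have "{i. i < n \<and> d ((f ^^ i) x) ((f ^^ i) y) < t} \<subseteq> {..<a}"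
    using assms not_le by auto
  then show ?thesis
    unfolding xi_def using card_mono[of "{..<a}"] by fastforce
qed

lemma xi_ge_if_close:
  assumes "\<forall>i. a \<le> i \<and> i < b \<longrightarrow> d ((f ^^ i) x) ((f ^^ i) y) < t" and "b \<le> n"
  shows "b - a \<le> xi f d x y t n"
proof -
  have "{a..<b} \<subseteq> {i. i < n \<and> d ((f ^^ i) x) ((f ^^ i) y) < t}"
    using assms by auto
  then show ?thesis
    unfolding xi_def using card_mono[of _ "{a..<b}"] by fastforce
qed

lemma xi_ratio_le_1: "real (xi f d x y t n) / real n \<le> 1"
  by (cases "n = 0") (simp_all add: xi_le divide_le_eq_1)

lemma Flow_nonneg: "0 \<le> Flow f d x y t"
  unfolding Flow_def by (intro Liminf_bounded always_eventually) simp

lemma Fup_le_1: "Fup f d x y t \<le> 1"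
  unfolding Fup_def by (intro Limsup_bounded always_eventually) (simp add: xi_ratio_le_1)

lemma Flow_eq_0_if_subseq:
  assumes "strict_mono r" and "(\<lambda>k. real (xi f d x y t (r k)) / real (r k)) \<longlonglongrightarrow> 0"
  shows "Flow f d x y t = 0"
proof (rule antisym[OF _ Flow_nonneg])
  have "Flow f d x y t \<le> liminf ((\<lambda>n. ereal (real (xi f d x y t n) / real n)) \<circ> r)"
    unfolding Flow_def by (rule liminf_subseq_mono[OF assms(1)])
  also have "\<dots> = 0"
    using assms(2) by (simp add: comp_def lim_imp_Liminf zero_ereal_def)
  finally show "Flow f d x y t \<le> 0" .
qed

lemma Fup_eq_1_if_subseq:
  assumes "strict_mono r" and "(\<lambda>k. real (xi f d x y t (r k)) / real (r k)) \<longlonglongrightarrow> 1"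
  shows "Fup f d x y t = 1"
proof (rule antisym[OF Fup_le_1])
  have "((\<lambda>k. ereal (real (xi f d x y t (r k)) / real (r k))) \<longlongrightarrow> 1) sequentially"
    using tendsto_ereal[OF assms(2)] by (simp add: one_ereal_def)
  then have "1 = limsup ((\<lambda>n. ereal (real (xi f d x y t n) / real n)) \<circ> r)"
    by (simp add: comp_def lim_imp_Limsup)
  also have "\<dots> \<le> Fup f d x y t"
    unfolding Fup_def by (rule limsup_subseq_mono[OF assms(1)])
  finally show "1 \<le> Fup f d x y t" .
qed

lemma Flow_eq_1_if_eventually_close:
  assumes "\<forall>i\<ge>N. d ((f ^^ i) x) ((f ^^ i) y) < t"
  shows "Flow f d x y t = 1"
proof -
  have lower: "1 - real N / real n \<le> real (xi f d x y t n) / real n" if "0 < n" for n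
  proof -
    have "n - N \<le> xi f d x y t n"
      using assms by (intro xi_ge_if_close) auto
    then have "real n - real N \<le> real (xi f d x y t n)"
      by linarith
    moreover have "1 - real N / real n = (real n - real N) / real n"
      using that by (simp add: field_simps)
    ultimately show ?thesis
      by (simp add: divide_right_mono)
  qed
  have ev: "\<forall>\<^sub>F n in sequentially. 1 - real N / real n \<le> real (xi f d x y t n) / real n"
    using eventually_gt_at_top[of 0] by (rule eventually_mono) (rule lower)
  have lim: "(\<lambda>n. 1 - real N / real n) \<longlonglongrightarrow> 1"
    using tendsto_diff[OF tendsto_const lim_const_over_n, of 1 "real N"] by simp
  have "(\<lambda>n. real (xi f d x y t n) / real n) \<longlonglongrightarrow> 1"
    by (rule real_tendsto_sandwich[OF ev always_eventually lim tendsto_const]) (simp add: xi_ratio_le_1)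
  then show ?thesis
    unfolding Flow_def by (simp add: lim_imp_Liminf one_ereal_def)
qed

lemma card_avoiding_progression:
  fixes p i0 n :: nat
  assumes p: "0 < p" and n: "2 * (i0 + p) \<le> n" and avoid: "\<And>k. \<not> P (i0 + k * p)"
  shows "2 * p * card {i. i < n \<and> P i} + n \<le> 2 * p * n"
proof -
  define m where "m = (n - i0) div p"
  define B where "B = (\<lambda>k. i0 + k * p) ` {..<m}"
  have "i0 + k * p < n" if "k < m" for k
  proof -
    have "k * p < m * p"
      using that p by simp
    moreover have "m * p \<le> n - i0"
      unfolding m_def by (simp add: div_times_less_eq_dividend)
    ultimately show ?thesis
      using n by linarith
  qed
  then have "B \<subseteq> {..<n}"
    unfolding B_def by auto
  moreover have "card B = m"
    unfolding B_def using p by (subst card_image) (auto simp: inj_on_def)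
  moreover have "{i. i < n \<and> P i} \<subseteq> {..<n} - B"
    using avoid unfolding B_def by auto
  ultimately have "card {i. i < n \<and> P i} + m \<le> n"
    using card_mono[of "{..<n} - B" "{i. i < n \<and> P i}"] card_Diff_subset[of B "{..<n}"]
      finite_subset[of B "{..<n}"] card_mono[of "{..<n}" B] by auto
  then have "2 * p * card {i. i < n \<and> P i} + 2 * p * m \<le> 2 * p * n"
    using mult_le_mono2[of _ _ "2 * p"] by (simp only: add_mult_distrib2[symmetric])
  moreover have "n - i0 = m * p + (n - i0) mod p"
    unfolding m_def by simp
  moreover have "(n - i0) mod p < p"
    using p by simp
  ultimately show ?thesis
    using n by (simp add: algebra_simps)
qed

lemma Fup_lt_1_if_periodically_far:
  assumes p: "0 < p" and far: "\<And>k. \<not> d ((f ^^ (i0 + k * p)) x) ((f ^^ (i0 + k * p)) y) < t"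
  shows "Fup f d x y t < 1"
proof -
  have bound: "real (xi f d x y t n) / real n \<le> 1 - 1 / (2 * real p)" if "2 * (i0 + p) \<le> n" for n
  proof -
    have "2 * p * xi f d x y t n + n \<le> 2 * p * n"
      unfolding xi_def
      by (rule card_avoiding_progression[where P="\<lambda>i. d ((f ^^ i) x) ((f ^^ i) y) < t", OF p that far])
    then have "real (2 * p * xi f d x y t n + n) \<le> real (2 * p * n)"
      by (simp only: of_nat_le_iff)
    then have "2 * real p * real (xi f d x y t n) + real n \<le> 2 * real p * real n"
      by simp
    moreover have "0 < n"
      using that p by simp
    ultimately show ?thesis
      using p by (simp add: field_simps)
  qed
  have "\<forall>\<^sub>F n in sequentially. ereal (real (xi f d x y t n) / real n) \<le> ereal (1 - 1 / (2 * real p))"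
    using eventually_ge_at_top[of "2 * (i0 + p)"] by (rule eventually_mono) (simp add: bound)
  then have "Fup f d x y t \<le> ereal (1 - 1 / (2 * real p))"
    unfolding Fup_def by (rule Limsup_bounded)
  also have "\<dots> < 1"
    using p by simp
  finally show ?thesis .
qed

section \<open>No scrambled pairs when every point is quasi-periodic\<close>

lemma not_dc2_pair_if_all_quasi_periodic:
  fixes \<phi> :: "'g::countable \<Rightarrow> 'g" and d :: "('g \<Rightarrow> 'x::finite) \<Rightarrow> ('g \<Rightarrow> 'x) \<Rightarrow> real"
  assumes cm: "compatible_metric d" and qp: "\<forall>\<theta>. quasi_periodic \<phi> \<theta>"
  shows "\<not> dc2_pair (gshift \<phi>) d x y"
proof
  assume "dc2_pair (gshift \<phi>) d x y"
  then obtain s0 where s0: "0 < s0" "Flow (gshift \<phi>) d x y s0 < 1"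
    and Fup: "\<And>s. 0 < s \<Longrightarrow> Fup (gshift \<phi>) d x y s = 1"
    unfolding dc2_pair_def by blast
  obtain F where F: "finite F" and close: "\<And>z w. \<forall>\<gamma>\<in>F. z \<gamma> = w \<gamma> \<Longrightarrow> d z w < s0"
    using compatible_metric_close_if_agree[OF cm s0(1)] by blast
  obtain s where s: "0 < s" and agree: "\<And>z w. d z w < s \<Longrightarrow> \<forall>\<gamma>\<in>F. z \<gamma> = w \<gamma>"
    using compatible_metric_agree_if_close[OF cm F] by blast
  obtain a p where p: "0 < p" and period: "\<forall>i\<ge>a. \<forall>\<gamma>\<in>F. (\<phi> ^^ (i + p)) \<gamma> = (\<phi> ^^ i) \<gamma>"
    using quasi_periodic_common_period[OF F] qp by blast
  define agree_at where "agree_at i \<longleftrightarrow> (\<forall>\<gamma>\<in>F. x ((\<phi> ^^ i) \<gamma>) = y ((\<phi> ^^ i) \<gamma>))" for i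
  show False
  proof (cases "\<forall>i\<ge>a. agree_at i")
    case True
    then have "\<forall>i\<ge>a. d ((gshift \<phi> ^^ i) x) ((gshift \<phi> ^^ i) y) < s0"
      unfolding agree_at_def by (auto simp: gshift_funpow_apply intro!: close)
    then have "Flow (gshift \<phi>) d x y s0 = 1"
      by (rule Flow_eq_1_if_eventually_close[where f="gshift \<phi>" and N=a])
    with s0(2) show False
      by simp
  next
    case False
    then obtain i0 where i0: "a \<le> i0" "\<not> agree_at i0"
      by blast
    have shift: "agree_at (i + p) = agree_at i" if "a \<le> i" for i
      using period that unfolding agree_at_def by simp
    have "\<not> agree_at (i0 + k * p)" for k
      using periodic_from_add_mult[where g=agree_at, OF shift i0(1)] i0(2) by simp
    then have "\<not> d ((gshift \<phi> ^^ (i0 + k * p)) x) ((gshift \<phi> ^^ (i0 + k * p)) y) < s" for k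
      using agree[of "(gshift \<phi> ^^ (i0 + k * p)) x" "(gshift \<phi> ^^ (i0 + k * p)) y"]
      unfolding agree_at_def gshift_funpow_apply by blast
    then have "Fup (gshift \<phi>) d x y s < 1"
      by (rule Fup_lt_1_if_periodically_far[where f="gshift \<phi>", OF p])
    then show False
      using Fup[OF s] by simp
  qed
qed

section \<open>Coding sets of naturals along an injective orbit\<close>

text \<open>Block k is the interval [k!, (k+1)!).  As prod_encode is a bijection, the membership of j
  in Z is recorded on each of the infinitely many odd blocks 2 * prod_encode (j, t) + 1.\<close>

definition block_tag :: "nat \<Rightarrow> nat" where
  "block_tag k = fst (prod_decode (k div 2))"

definition marked :: "nat set \<Rightarrow> nat \<Rightarrow> bool" where
  "marked Z m \<longleftrightarrow> (\<exists>k. fact k \<le> m \<and> m < fact (Suc k) \<and> odd k \<and> block_tag k \<in> Z)"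

definition coded_point :: "('g \<Rightarrow> 'g) \<Rightarrow> 'g \<Rightarrow> 'x \<Rightarrow> 'x \<Rightarrow> nat set \<Rightarrow> 'g \<Rightarrow> 'x" where
  "coded_point \<phi> \<theta> a b Z \<alpha> = (if \<exists>m. \<alpha> = (\<phi> ^^ m) \<theta> \<and> marked Z m then b else a)"

lemma fact_block_unique:
  fixes m :: nat
  assumes "fact k \<le> m" "m < fact (Suc k)" "fact k' \<le> m" "m < fact (Suc k')"
  shows "k = k'"
proof (rule ccontr)
  assume "k \<noteq> k'"
  then have "Suc k \<le> k' \<or> Suc k' \<le> k"
    by linarith
  then have "(fact (Suc k) :: nat) \<le> fact k' \<or> (fact (Suc k') :: nat) \<le> fact k"
    using fact_mono by blast
  with assms show False
    by linarith
qed

lemma marked_in_block: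
  assumes "fact k \<le> m" "m < fact (Suc k)"
  shows "marked Z m \<longleftrightarrow> odd k \<and> block_tag k \<in> Z"
  unfolding marked_def using assms fact_block_unique[OF assms] by blast

lemma block_tag_odd: "block_tag (Suc (2 * prod_encode (j, t))) = j"
  unfolding block_tag_def by simp

lemma coded_point_orbit:
  assumes "inj (\<lambda>m. (\<phi> ^^ m) \<theta>)"
  shows "coded_point \<phi> \<theta> a b Z ((\<phi> ^^ m) \<theta>) = (if marked Z m then b else a)"
  using injD[OF assms] unfolding coded_point_def by metis

lemma coded_point_off_orbit:
  assumes "\<forall>m. \<alpha> \<noteq> (\<phi> ^^ m) \<theta>"
  shows "coded_point \<phi> \<theta> a b Z \<alpha> = a"
  using assms unfolding coded_point_def by auto

lemma inj_coded_point:
  assumes inj: "inj (\<lambda>m. (\<phi> ^^ m) \<theta>)" and "a \<noteq> b"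
  shows "inj (coded_point \<phi> \<theta> a b)"
proof
  fix Z Z' assume eq: "coded_point \<phi> \<theta> a b Z = coded_point \<phi> \<theta> a b Z'"
  have "marked Y (fact (2 * prod_encode (j, 0) + 1)) \<longleftrightarrow> j \<in> Y" for Y j
    by (subst marked_in_block[where k="2 * prod_encode (j, 0) + 1"])
      (simp_all add: block_tag_odd fact_Suc)
  moreover have "marked Z m \<longleftrightarrow> marked Z' m" for m
    using fun_cong[OF eq, of "(\<phi> ^^ m) \<theta>"] \<open>a \<noteq> b\<close>
    by (simp add: coded_point_orbit[OF inj] split: if_splits)
  ultimately show "Z = Z'"
    by blast
qed

lemma uncountable_UNIV_nat_set: "uncountable (UNIV :: nat set set)"
proof
  assume "countable (UNIV :: nat set set)"
  then obtain f :: "nat \<Rightarrow> nat set" where "range f = UNIV"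
    by (metis uncountable_def UNIV_not_empty)
  then show False
    using Cantors_theorem[of "UNIV :: nat set"] by simp
qed

lemma fact_block_fraction_le:
  fixes n :: nat
  assumes "n \<le> fact k"
  shows "real n / real (fact (Suc k)) \<le> 1 / real (Suc k)"
proof -
  have "real n / real (fact (Suc k)) \<le> real (fact k) / real (fact (Suc k))"
    using assms by (intro divide_right_mono) (simp_all only: of_nat_le_iff of_nat_0_le_iff)
  also have "\<dots> = 1 / real (Suc k)"
    unfolding fact_Suc[of k] of_nat_mult by simp
  finally show ?thesis .
qed

lemma fact_block_fraction_ge:
  fixes n c :: nat
  assumes "fact (Suc k) - c - (fact k + c) \<le> n"
  shows "1 - (1 + 2 * real c) / real (Suc k) \<le> real n / real (fact (Suc k))"
proof -
  define M where "M = real (fact (Suc k))"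
  have M: "M = real (Suc k) * fact k"
    unfolding M_def by (simp only: fact_Suc of_nat_mult of_nat_fact of_nat_id)
  have "fact (Suc k) \<le> n + (fact k + 2 * c)"
    using assms by linarith
  then have "real (fact (Suc k)) \<le> real (n + (fact k + 2 * c))"
    by (simp only: of_nat_le_iff)
  then have "M - (fact k + 2 * real c) \<le> real n"
    unfolding M_def by simp
  then have "1 - (fact k + 2 * real c) / M \<le> real n / M"
    unfolding M by (simp add: divide_simps)
  moreover have "(fact k + 2 * real c) / M \<le> (1 + 2 * real c) * fact k / M"
    using mult_left_mono[of 1 "fact k" "2 * real c"]
    by (intro divide_right_mono) (simp_all add: M algebra_simps)
  moreover have "(1 + 2 * real c) * fact k / M = (1 + 2 * real c) / real (Suc k)"
    unfolding M by simp
  ultimately show ?thesis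
    unfolding M_def by linarith
qed

lemma Flow_coded_points_eq_0:
  fixes \<phi> :: "'g \<Rightarrow> 'g" and d :: "('g \<Rightarrow> 'x) \<Rightarrow> ('g \<Rightarrow> 'x) \<Rightarrow> real"
  assumes inj: "inj (\<lambda>m. (\<phi> ^^ m) \<theta>)" and "a \<noteq> b"
    and sep: "\<And>z w. d z w < \<epsilon> \<Longrightarrow> z \<theta> = w \<theta>"
    and j: "j \<in> Z \<longleftrightarrow> j \<notin> Z'"
  shows "Flow (gshift \<phi>) d (coded_point \<phi> \<theta> a b Z) (coded_point \<phi> \<theta> a b Z') \<epsilon> = 0"
proof -
  let ?X = "coded_point \<phi> \<theta> a b Z" and ?Y = "coded_point \<phi> \<theta> a b Z'"
  define k where "k t = Suc (2 * prod_encode (j, t))" for t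
  have far: "\<not> d ((gshift \<phi> ^^ i) ?X) ((gshift \<phi> ^^ i) ?Y) < \<epsilon>"
    if "fact (k t) \<le> i" "i < fact (Suc (k t))" for t i
  proof
    assume "d ((gshift \<phi> ^^ i) ?X) ((gshift \<phi> ^^ i) ?Y) < \<epsilon>"
    then have "(gshift \<phi> ^^ i) ?X \<theta> = (gshift \<phi> ^^ i) ?Y \<theta>"
      by (rule sep)
    then have "?X ((\<phi> ^^ i) \<theta>) = ?Y ((\<phi> ^^ i) \<theta>)"
      unfolding gshift_funpow_apply .
    then have "marked Z i \<longleftrightarrow> marked Z' i"
      using \<open>a \<noteq> b\<close> by (simp add: coded_point_orbit[OF inj] split: if_splits)
    with j show False
      unfolding marked_in_block[OF that] by (simp add: k_def block_tag_odd)
  qed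
  have ratio: "real (xi (gshift \<phi>) d ?X ?Y \<epsilon> (fact (Suc (k t)))) / real (fact (Suc (k t))) \<le> 1 / real (Suc t)"
    for t
  proof -
    have "xi (gshift \<phi>) d ?X ?Y \<epsilon> (fact (Suc (k t))) \<le> fact (k t)"
      using far by (intro xi_le_if_far) blast
    then have "real (xi (gshift \<phi>) d ?X ?Y \<epsilon> (fact (Suc (k t)))) / real (fact (Suc (k t)))
        \<le> 1 / real (Suc (k t))"
      by (rule fact_block_fraction_le)
    also have "\<dots> \<le> 1 / real (Suc t)"
      using le_prod_encode_2[of t j] unfolding k_def by (simp add: frac_le)
    finally show ?thesis .
  qed
  have "prod_encode (j, t) < prod_encode (j, Suc t)" for t
    by (simp add: prod_encode_def)
  then have "strict_mono k"
    unfolding strict_mono_Suc_iff k_def by simp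
  then have "strict_mono (\<lambda>t. fact (Suc (k t)) :: nat)"
    unfolding strict_mono_def using fact_less_mono_nat[of "Suc (k _)"] by (simp del: fact_Suc)
  moreover have "(\<lambda>t. real (xi (gshift \<phi>) d ?X ?Y \<epsilon> (fact (Suc (k t)))) / real (fact (Suc (k t))))
      \<longlonglongrightarrow> 0"
    by (rule real_tendsto_sandwich[OF always_eventually always_eventually tendsto_const
          LIMSEQ_Suc[OF lim_const_over_n[of 1]]]) (simp, intro allI ratio)
  ultimately show ?thesis
    by (rule Flow_eq_0_if_subseq)
qed

lemma coded_point_even_block:
  fixes \<phi> :: "'g \<Rightarrow> 'g"
  assumes inj: "inj (\<lambda>m. (\<phi> ^^ m) \<theta>)"
    and shift: "\<forall>\<gamma>\<in>F. \<forall>i m. (\<phi> ^^ i) \<gamma> = (\<phi> ^^ m) \<theta> \<longrightarrow> i \<le> m + C \<and> m \<le> i + C"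
    and "\<gamma> \<in> F" and "even k" and "fact k + C \<le> i" and "i + C < fact (Suc k)"
  shows "(gshift \<phi> ^^ i) (coded_point \<phi> \<theta> a b Z) \<gamma> = a"
proof (cases "\<exists>m. (\<phi> ^^ i) \<gamma> = (\<phi> ^^ m) \<theta>")
  case True
  then obtain m where m: "(\<phi> ^^ i) \<gamma> = (\<phi> ^^ m) \<theta>"
    by blast
  with shift \<open>\<gamma> \<in> F\<close> have "i \<le> m + C" "m \<le> i + C"
    by blast+
  with assms(5,6) have "fact k \<le> m" "m < fact (Suc k)"
    by linarith+
  then have "\<not> marked Z m"
    using marked_in_block \<open>even k\<close> by blast
  then show ?thesis
    by (simp add: gshift_funpow_apply m coded_point_orbit[OF inj])
next
  case False
  then show ?thesis
    by (simp add: gshift_funpow_apply coded_point_off_orbit)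
qed

lemma Fup_coded_points_eq_1:
  fixes \<phi> :: "'g::countable \<Rightarrow> 'g" and d :: "('g \<Rightarrow> 'x::finite) \<Rightarrow> ('g \<Rightarrow> 'x) \<Rightarrow> real"
  assumes inj: "inj (\<lambda>m. (\<phi> ^^ m) \<theta>)" and cm: "compatible_metric d" and "0 < s"
  shows "Fup (gshift \<phi>) d (coded_point \<phi> \<theta> a b Z) (coded_point \<phi> \<theta> a b Z') s = 1"
proof -
  let ?X = "coded_point \<phi> \<theta> a b Z" and ?Y = "coded_point \<phi> \<theta> a b Z'"
  obtain F where F: "finite F" and close: "\<And>z w. \<forall>\<gamma>\<in>F. z \<gamma> = w \<gamma> \<Longrightarrow> d z w < s"
    using compatible_metric_close_if_agree[OF cm \<open>0 < s\<close>] by blast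
  obtain C where C: "\<forall>\<gamma>\<in>F. \<forall>i m. (\<phi> ^^ i) \<gamma> = (\<phi> ^^ m) \<theta> \<longrightarrow> i \<le> m + C \<and> m \<le> i + C"
    using orbit_meet_bounded_shift_finite[OF inj F] by blast
  define M :: "nat \<Rightarrow> nat" where "M t = fact (Suc (2 * t))" for t
  have ratio: "1 - (1 + 2 * real C) / real (Suc t) \<le> real (xi (gshift \<phi>) d ?X ?Y s (M t)) / real (M t)"
    for t
  proof -
    have "(gshift \<phi> ^^ i) ?X \<gamma> = (gshift \<phi> ^^ i) ?Y \<gamma>"
      if "\<gamma> \<in> F" "fact (2 * t) + C \<le> i" "i < M t - C" for \<gamma> i
    proof -
      have "i + C < fact (Suc (2 * t))"
        using that(3) unfolding M_def by linarith
      then show ?thesis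
        by (simp add: coded_point_even_block[OF inj C that(1) _ that(2)])
    qed
    then have "\<forall>i. fact (2 * t) + C \<le> i \<and> i < M t - C \<longrightarrow> d ((gshift \<phi> ^^ i) ?X) ((gshift \<phi> ^^ i) ?Y) < s"
      by (blast intro: close)
    then have "M t - C - (fact (2 * t) + C) \<le> xi (gshift \<phi>) d ?X ?Y s (M t)"
      by (rule xi_ge_if_close[where f="gshift \<phi>"]) simp
    then have "1 - (1 + 2 * real C) / real (Suc (2 * t)) \<le> real (xi (gshift \<phi>) d ?X ?Y s (M t)) / real (M t)"
      unfolding M_def by (rule fact_block_fraction_ge)
    moreover have "1 - (1 + 2 * real C) / real (Suc t) \<le> 1 - (1 + 2 * real C) / real (Suc (2 * t))"
      by (simp add: frac_le)
    ultimately show ?thesis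
      by linarith
  qed
  have "strict_mono M"
    unfolding strict_mono_Suc_iff M_def by (simp del: fact_Suc add: fact_less_mono_nat)
  moreover have "(\<lambda>t. real (xi (gshift \<phi>) d ?X ?Y s (M t)) / real (M t)) \<longlonglongrightarrow> 1"
  proof (rule real_tendsto_sandwich[OF always_eventually always_eventually _ tendsto_const])
    show "(\<lambda>t. 1 - (1 + 2 * real C) / real (Suc t)) \<longlonglongrightarrow> 1"
      using tendsto_diff[OF tendsto_const LIMSEQ_Suc[OF lim_const_over_n[of "1 + 2 * real C"]]]
      by simp
  qed (intro allI ratio xi_ratio_le_1)+
  ultimately show ?thesis
    by (rule Fup_eq_1_if_subseq)
qed

lemma uniform_DC_if_not_quasi_periodic:
  fixes \<phi> :: "'g::countable \<Rightarrow> 'g" and d :: "('g \<Rightarrow> 'x::finite) \<Rightarrow> ('g \<Rightarrow> 'x) \<Rightarrow> real"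
  assumes card: "CARD('x) \<ge> 2" and cm: "compatible_metric d" and "\<not> quasi_periodic \<phi> \<theta>"
  shows "uniform_DC (gshift \<phi>) d"
proof -
  have inj: "inj (\<lambda>m. (\<phi> ^^ m) \<theta>)"
    using assms(3) by (simp add: quasi_periodic_iff_not_inj)
  obtain a b :: 'x where "a \<noteq> b"
    using card card_le_Suc0_iff_eq[of "UNIV :: 'x set"] by fastforce
  obtain \<epsilon> where "0 < \<epsilon>" and sep: "\<And>z w. d z w < \<epsilon> \<Longrightarrow> z \<theta> = w \<theta>"
    using compatible_metric_agree_if_close[OF cm, of "{\<theta>}"] by auto
  define A where "A = range (coded_point \<phi> \<theta> a b)"
  have inj_code: "inj (coded_point \<phi> \<theta> a b)"
    by (rule inj_coded_point[OF inj \<open>a \<noteq> b\<close>])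
  have "uncountable A"
    unfolding A_def using uncountable_UNIV_nat_set countable_image_inj_on[OF _ inj_code] by blast
  have pair: "dc1_pair (gshift \<phi>) d x y \<and> Flow (gshift \<phi>) d x y \<epsilon> = 0"
    if "x \<in> A" "y \<in> A" "x \<noteq> y" for x y
  proof -
    obtain Z Z' where x: "x = coded_point \<phi> \<theta> a b Z" and y: "y = coded_point \<phi> \<theta> a b Z'"
      using \<open>x \<in> A\<close> \<open>y \<in> A\<close> unfolding A_def by blast
    with \<open>x \<noteq> y\<close> have "Z \<noteq> Z'"
      by blast
    then obtain j where j: "j \<in> Z \<longleftrightarrow> j \<notin> Z'"
      by blast
    have "Flow (gshift \<phi>) d x y \<epsilon> = 0"
      unfolding x y using inj \<open>a \<noteq> b\<close> sep j by (rule Flow_coded_points_eq_0)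
    moreover have "\<forall>s>0. Fup (gshift \<phi>) d x y s = 1"
      unfolding x y using inj cm by (blast intro: Fup_coded_points_eq_1)
    ultimately show ?thesis
      unfolding dc1_pair_def using \<open>0 < \<epsilon>\<close> by blast
  qed
  have "coded_point \<phi> \<theta> a b {} \<noteq> coded_point \<phi> \<theta> a b UNIV"
    using injD[OF inj_code] by blast
  then have "dc1_scrambled (gshift \<phi>) d A"
    unfolding dc1_scrambled_def A_def using pair[unfolded A_def] by blast
  then show ?thesis
    unfolding uniform_DC_def using \<open>uncountable A\<close> \<open>0 < \<epsilon>\<close> pair by blast
qed

section \<open>The dichotomy\<close>

lemma dc2_pair_if_dc1_pair:
  assumes "dc1_pair f d x y"
  shows "dc2_pair f d x y"
proof -
  obtain s where "0 < s" "Flow f d x y s = 0" and Fup: "\<forall>s>0. Fup f d x y s = 1"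
    using assms unfolding dc1_pair_def by blast
  then have "Flow f d x y s < 1"
    by simp
  with \<open>0 < s\<close> Fup show ?thesis
    unfolding dc2_pair_def by blast
qed

lemma dc2_scrambled_if_dc1_scrambled: "dc1_scrambled f d A \<Longrightarrow> dc2_scrambled f d A"
  unfolding dc1_scrambled_def dc2_scrambled_def by (simp add: dc2_pair_if_dc1_pair)

lemma distributional_chaos_implications:
  shows "uniform_DC f d \<Longrightarrow> DCu1 f d"
    and "DCu1 f d \<Longrightarrow> DCinf1 f d"
    and "DCinf1 f d \<Longrightarrow> DC21 f d"
    and "DC21 f d \<Longrightarrow> DC22 f d"
    and "DCu1 f d \<Longrightarrow> DCu2 f d"
    and "DCu2 f d \<Longrightarrow> DCinf2 f d"
    and "DCinf2 f d \<Longrightarrow> DC22 f d"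
proof -
  show "uniform_DC f d \<Longrightarrow> DCu1 f d"
    unfolding uniform_DC_def DCu1_def by auto
  show "DCu1 f d \<Longrightarrow> DCinf1 f d"
    unfolding DCu1_def DCinf1_def using uncountable_infinite by auto
  show "DCinf1 f d \<Longrightarrow> DC21 f d"
    unfolding DCinf1_def DC21_def by auto
  show "DC21 f d \<Longrightarrow> DC22 f d"
    unfolding DC21_def DC22_def using dc2_scrambled_if_dc1_scrambled by auto
  show "DCu1 f d \<Longrightarrow> DCu2 f d"
    unfolding DCu1_def DCu2_def using dc2_scrambled_if_dc1_scrambled by auto
  show "DCu2 f d \<Longrightarrow> DCinf2 f d"
    unfolding DCu2_def DCinf2_def using uncountable_infinite by auto
  show "DCinf2 f d \<Longrightarrow> DC22 f d"
    unfolding DCinf2_def DC22_def by auto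
qed

theorem theorem3p5:
  fixes \<phi> :: "'g::countable \<Rightarrow> 'g"
    and d :: "('g \<Rightarrow> 'x::finite) \<Rightarrow> ('g \<Rightarrow> 'x) \<Rightarrow> real"
  assumes "CARD('x) \<ge> 2"
    and "compatible_metric d"
  shows "((\<exists>\<theta>. \<not> quasi_periodic \<phi> \<theta>) \<longleftrightarrow> uniform_DC (gshift \<phi>) d)
       \<and> ((\<exists>\<theta>. \<not> quasi_periodic \<phi> \<theta>) \<longleftrightarrow> DCu1 (gshift \<phi>) d)
       \<and> ((\<exists>\<theta>. \<not> quasi_periodic \<phi> \<theta>) \<longleftrightarrow> DCinf1 (gshift \<phi>) d)
       \<and> ((\<exists>\<theta>. \<not> quasi_periodic \<phi> \<theta>) \<longleftrightarrow> DC21 (gshift \<phi>) d)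
       \<and> ((\<exists>\<theta>. \<not> quasi_periodic \<phi> \<theta>) \<longleftrightarrow> DCu2 (gshift \<phi>) d)
       \<and> ((\<exists>\<theta>. \<not> quasi_periodic \<phi> \<theta>) \<longleftrightarrow> DCinf2 (gshift \<phi>) d)
       \<and> ((\<exists>\<theta>. \<not> quasi_periodic \<phi> \<theta>) \<longleftrightarrow> DC22 (gshift \<phi>) d)"
proof -
  have "(\<exists>\<theta>. \<not> quasi_periodic \<phi> \<theta>) \<Longrightarrow> uniform_DC (gshift \<phi>) d"
    using uniform_DC_if_not_quasi_periodic[OF assms] by blast
  moreover have "DC22 (gshift \<phi>) d \<Longrightarrow> \<exists>\<theta>. \<not> quasi_periodic \<phi> \<theta>"
    using not_dc2_pair_if_all_quasi_periodic[OF assms(2)]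
    unfolding DC22_def dc2_scrambled_def by blast
  ultimately show ?thesis
    using distributional_chaos_implications[of "gshift \<phi>" d] by blast
qed

end
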